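(* Let $d\ge 1$, let $\gamma>0$ be real and let $\varepsilon>0$. There exists a positive integer $k$ (depending only on $d,\gamma,\varepsilon$, not on $n$ or $\lambda$) with the following property. For every $n$ and every partition $\lambda=(\lambda_1,\dots,\lambda_d)\vdash n$ with exactly $d$ parts satisfying $\lambda_j/n\ge\gamma$ for all $j=1,\dots,d$, there exist integers $1\le i\le d+1$ and $1\le q<k$ and a partition $\mu=(\mu_1,\dots,\mu_{d+1})$ of $n'=kn$ such that (1) $\mu_j=q\lambda_j$ for all $j\le i-1$; (2) $\mu_{j+1}=q\lambda_j$ for all $j$ with $i\le j\le d$ (and $\mu_i=(k-q)n$); (3) $|\Phi(\mu)-\Phi(\lambda)-1|<\varepsilon$.
   Context: For real numbers $x_1,\dots,x_k\ge 0$ with $x_1+\cdots+x_k=1$ define $\Phi(x_1,\dots,x_k)=\dfrac{1}{x_1^{x_1}\cdots x_k^{x_k}}$, with $0^0=1$. For a partition $\lambda=(\lambda_1,\dots,\lambda_k)\vdash n$ put $\Phi(\lambda)=\Phi(\lambda_1/n,\dots,\lambda_k/n)$ (zero parts may be appended without changing the value). *)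

theory Defs
  imports Complex_Main
begin

text \<open>x^x with the convention 0^0 = 1 (note: 0 powr 0 = 0 in Isabelle).\<close>
definition selfpow :: "real \<Rightarrow> real" where
  "selfpow x = (if x = 0 then 1 else x powr x)"

definition Phi :: "nat \<Rightarrow> (nat \<Rightarrow> real) \<Rightarrow> real" where
  "Phi m x = 1 / (\<Prod>j\<in>{1..m}. selfpow (x j))"

definition Phi_part :: "nat \<Rightarrow> nat \<Rightarrow> (nat \<Rightarrow> nat) \<Rightarrow> real" where
  "Phi_part n m lam = Phi m (\<lambda>j. real (lam j) / real n)"

definition is_partition :: "nat \<Rightarrow> nat \<Rightarrow> (nat \<Rightarrow> nat) \<Rightarrow> bool" where
  "is_partition n m lam \<longleftrightarrow>
     (\<forall>j. 1 \<le> j \<and> j < m \<longrightarrow> lam (j+1) \<le> lam j) \<and> (\<Sum>j\<in>{1..m}. lam j) = n"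

end

theory Submission
  imports Defs
begin

text \<open>Write \<open>x\<^sub>j = \<lambda>\<^sub>j / n\<close> and let \<open>L = -\<Sum> x\<^sub>j ln x\<^sub>j\<close> be its entropy, so that
  \<open>\<Phi>(\<lambda>) = e\<^sup>L\<close> and \<open>e\<^sup>L \<le> 1/\<gamma>\<close>. Inserting the part \<open>(k - q) n\<close> into \<open>q\<lambda>\<close> at the place that keeps
  it nonincreasing gives, with \<open>t = q/k\<close>, \<open>\<Phi>(\<mu>) = exp (h(t) + tL)\<close> where \<open>h\<close> is the binary
  entropy. This exponent equals \<open>ln (e\<^sup>L + 1)\<close> minus the relative entropy of \<open>t\<close> with respect
  to \<open>t\<^sup>* = e\<^sup>L / (e\<^sup>L + 1)\<close>, which is at most quadratic in \<open>t - t\<^sup>*\<close>. Choosing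
  \<open>q = \<lfloor>k t\<^sup>*\<rfloor>\<close> therefore makes \<open>\<Phi>(\<mu>) - \<Phi>(\<lambda>) - 1\<close> of order \<open>(1/\<gamma> + 1)\<^sup>3 / k\<^sup>2\<close>.\<close>

definition binary_entropy :: "real \<Rightarrow> real" where
  "binary_entropy t = - t * ln t - (1 - t) * ln (1 - t)"

definition binary_relative_entropy :: "real \<Rightarrow> real \<Rightarrow> real" where
  "binary_relative_entropy t s = t * (ln t - ln s) + (1 - t) * (ln (1 - t) - ln (1 - s))"

lemma binary_relative_entropy_nonneg:
  assumes "0 < t" "t < 1" "0 < s" "s < 1"
  shows "0 \<le> binary_relative_entropy t s"
proof -
  have "t - s \<le> t * (ln t - ln s)"
    using ln_diff_le[of s t] assms by (simp add: field_simps)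
  moreover have "s - t \<le> (1 - t) * (ln (1 - t) - ln (1 - s))"
    using ln_diff_le[of "1 - s" "1 - t"] assms by (simp add: field_simps)
  ultimately show ?thesis unfolding binary_relative_entropy_def by linarith
qed

lemma binary_relative_entropy_le:
  assumes "0 < t" "t < 1" "0 < s" "s < 1"
  shows "binary_relative_entropy t s \<le> (t - s)\<^sup>2 / (s * (1 - s))"
proof -
  have "t * (ln t - ln s) \<le> t * ((t - s) / s)"
    using ln_diff_le[of t s] assms by (intro mult_left_mono) auto
  moreover have "(1 - t) * (ln (1 - t) - ln (1 - s)) \<le> (1 - t) * ((s - t) / (1 - s))"
    using ln_diff_le[of "1 - t" "1 - s"] assms by (intro mult_left_mono) auto
  moreover have "t * ((t - s) / s) + (1 - t) * ((s - t) / (1 - s)) = (t - s)\<^sup>2 / (s * (1 - s))"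
    using assms by (simp add: field_simps power2_eq_square)
  ultimately show ?thesis unfolding binary_relative_entropy_def by linarith
qed

lemma exp_binary_entropy_near_max:
  fixes L t :: real
  assumes "0 < t" "t < 1"
  shows "\<bar>exp (binary_entropy t + t * L) - (exp L + 1)\<bar>
           \<le> (exp L + 1) ^ 3 / exp L * (t - exp L / (exp L + 1))\<^sup>2"
proof -
  define A where "A = exp L + 1"
  define s where "s = exp L / A"
  have A: "A > 1" unfolding A_def by simp
  have s: "0 < s" "s < 1" "1 - s = 1 / A"
  proof -
    have "exp L < A" unfolding A_def by simp
    then show "0 < s" "s < 1" using A by (simp_all add: s_def)
    have "1 - s = (A - exp L) / A" using A by (simp add: s_def diff_divide_distrib)
    then show "1 - s = 1 / A" by (simp add: A_def)
  qed
  have ln_s: "ln s = L - ln A" "ln (1 - s) = - ln A"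
    using A by (simp_all only: s(3)) (simp_all add: s_def ln_div)
  have gap: "binary_entropy t + t * L = ln A - binary_relative_entropy t s"
    unfolding binary_entropy_def binary_relative_entropy_def ln_s by (simp add: algebra_simps)
  define D where "D = binary_relative_entropy t s"
  have "s * (1 - s) = exp L / A\<^sup>2" using s(3) by (simp add: s_def power2_eq_square)
  then have D: "0 \<le> D" "D \<le> A\<^sup>2 / exp L * (t - s)\<^sup>2"
    unfolding D_def
    using binary_relative_entropy_nonneg[of t s] binary_relative_entropy_le[of t s] s assms
    by (simp_all add: mult.commute)
  have "exp (binary_entropy t + t * L) = A * exp (- D)"
    unfolding gap D_def using A by (simp add: exp_diff exp_minus divide_inverse)
  moreover have "1 - D \<le> exp (- D)" "exp (- D) \<le> 1"
    using exp_ge_add_one_self[of "- D"] D by auto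
  ultimately have "\<bar>exp (binary_entropy t + t * L) - A\<bar> = A * (1 - exp (- D))"
    using A by (simp add: abs_if algebra_simps)
  also have "\<dots> \<le> A * D"
    using \<open>1 - D \<le> exp (- D)\<close> A by (intro mult_left_mono) auto
  also have "\<dots> \<le> A * (A\<^sup>2 / exp L * (t - s)\<^sup>2)"
    using D A by (intro mult_left_mono) auto
  also have "\<dots> = A ^ 3 / exp L * (t - s)\<^sup>2"
    by (simp add: power2_eq_square power3_eq_cube)
  finally show ?thesis unfolding s_def A_def .
qed

lemma exp_binary_entropy_close_to_max:
  fixes L t M \<delta> :: real
  assumes "1 \<le> exp L" "exp L \<le> M" "0 < t" "t < 1" "\<bar>t - exp L / (exp L + 1)\<bar> \<le> \<delta>"
  shows "\<bar>exp (binary_entropy t + t * L) - (exp L + 1)\<bar> \<le> (M + 1) ^ 3 * \<delta>\<^sup>2"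
proof -
  have "(exp L + 1) ^ 3 / exp L \<le> (exp L + 1) ^ 3 / 1"
    using assms(1) by (intro divide_left_mono) (auto simp: add_pos_pos)
  also have "\<dots> \<le> (M + 1) ^ 3"
    unfolding div_by_1 using assms(2) by (intro power_mono) auto
  finally have "(exp L + 1) ^ 3 / exp L \<le> (M + 1) ^ 3" .
  moreover have "(t - exp L / (exp L + 1))\<^sup>2 \<le> \<delta>\<^sup>2"
    using assms(5) power_mono[of "\<bar>t - exp L / (exp L + 1)\<bar>" \<delta> 2] by simp
  moreover have "0 \<le> M + 1" using assms(1,2) by linarith
  ultimately have "(exp L + 1) ^ 3 / exp L * (t - exp L / (exp L + 1))\<^sup>2 \<le> (M + 1) ^ 3 * \<delta>\<^sup>2"
    by (intro mult_mono) simp_all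
  with exp_binary_entropy_near_max[OF assms(3,4), of L] show ?thesis by linarith
qed

definition entropy :: "nat \<Rightarrow> (nat \<Rightarrow> real) \<Rightarrow> real" where
  "entropy m x = - (\<Sum>j\<in>{1..m}. x j * ln (x j))"

lemma selfpow_eq_exp: "0 < x \<Longrightarrow> selfpow x = exp (x * ln x)"
  by (simp add: selfpow_def powr_def)

lemma Phi_eq_exp_entropy:
  assumes "\<And>j. j \<in> {1..m} \<Longrightarrow> 0 < x j"
  shows "Phi m x = exp (entropy m x)"
proof -
  have "(\<Prod>j\<in>{1..m}. selfpow (x j)) = exp (- entropy m x)"
    using assms by (simp add: entropy_def exp_sum selfpow_eq_exp)
  then show ?thesis by (simp add: Phi_def exp_minus divide_inverse)
qed

lemma entropy_scale:
  assumes "\<And>j. j \<in> {1..m} \<Longrightarrow> 0 < x j" "0 < t"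
  shows "entropy m (\<lambda>j. t * x j) = - t * ln t * (\<Sum>j\<in>{1..m}. x j) + t * entropy m x"
proof -
  have "(\<Sum>j\<in>{1..m}. t * x j * ln (t * x j)) = (\<Sum>j\<in>{1..m}. t * ln t * x j + t * (x j * ln (x j)))"
    using assms by (intro sum.cong) (auto simp: ln_mult algebra_simps)
  then show ?thesis
    by (simp add: entropy_def sum.distrib sum_distrib_left sum_negf)
qed

lemma entropy_nonneg:
  assumes "\<And>j. j \<in> {1..m} \<Longrightarrow> 0 < x j" "(\<Sum>j\<in>{1..m}. x j) = 1"
  shows "0 \<le> entropy m x"
proof -
  have "x j * ln (x j) \<le> 0" if j: "j \<in> {1..m}" for j
  proof -
    have "x j \<le> (\<Sum>j\<in>{1..m}. x j)"
      using assms(1) j by (intro member_le_sum) (auto intro: less_imp_le)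
    then have "ln (x j) \<le> 0" using assms j by simp
    then show ?thesis using assms(1)[OF j] by (simp add: mult_nonneg_nonpos)
  qed
  then have "(\<Sum>j\<in>{1..m}. x j * ln (x j)) \<le> 0" by (rule sum_nonpos)
  then show ?thesis unfolding entropy_def by simp
qed

lemma exp_entropy_le_inverse_min:
  assumes "0 < \<gamma>" "\<And>j. j \<in> {1..m} \<Longrightarrow> \<gamma> \<le> x j" "(\<Sum>j\<in>{1..m}. x j) = 1"
  shows "exp (entropy m x) \<le> 1 / \<gamma>"
proof -
  have "ln \<gamma> = (\<Sum>j\<in>{1..m}. x j * ln \<gamma>)"
    using assms(3) by (simp add: sum_distrib_right[symmetric])
  also have "\<dots> \<le> (\<Sum>j\<in>{1..m}. x j * ln (x j))"
  proof (intro sum_mono mult_left_mono)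
    fix j assume "j \<in> {1..m}"
    then show "ln \<gamma> \<le> ln (x j)" "0 \<le> x j" using assms(1) assms(2)[of j] by auto
  qed
  finally have "entropy m x \<le> ln (1 / \<gamma>)"
    using assms(1) by (simp add: entropy_def ln_div)
  then show ?thesis
    using assms(1) by (metis exp_le_cancel_iff exp_ln zero_less_divide_1_iff)
qed

definition insert_at :: "nat \<Rightarrow> 'a \<Rightarrow> (nat \<Rightarrow> 'a) \<Rightarrow> nat \<Rightarrow> 'a" where
  "insert_at i c f j = (if j < i then f j else if j = i then c else f (j - 1))"

lemma insert_at_below [simp]: "j < i \<Longrightarrow> insert_at i c f j = f j"
  by (simp add: insert_at_def)

lemma insert_at_same [simp]: "insert_at i c f i = c"
  by (simp add: insert_at_def)

lemma insert_at_above [simp]: "i \<le> j \<Longrightarrow> insert_at i c f (Suc j) = f j"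
  by (simp add: insert_at_def)

lemma bij_betw_skip_index:
  fixes i d :: nat
  assumes "1 \<le> i" "i \<le> d + 1"
  shows "bij_betw (\<lambda>j. if j < i then j else j + 1) {1..d} ({1..d + 1} - {i})"
proof (rule bij_betw_imageI)
  show "inj_on (\<lambda>j::nat. if j < i then j else j + 1) {1..d}"
    by (auto simp: inj_on_def split: if_splits)
  show "(\<lambda>j. if j < i then j else j + 1) ` {1..d} = {1..d + 1} - {i}"
  proof (intro equalityI subsetI)
    fix j assume "j \<in> {1..d + 1} - {i}"
    then show "j \<in> (\<lambda>j. if j < i then j else j + 1) ` {1..d}"
    proof (cases "j < i")
      case True
      then show ?thesis using \<open>j \<in> _\<close> assms by (intro rev_image_eqI[of j]) auto
    next
      case False
      then show ?thesis using \<open>j \<in> _\<close> assms by (intro rev_image_eqI[of "j - 1"]) auto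
    qed
  qed (use assms in auto)
qed

lemma insert_at_skip_index: "insert_at i c f (if j < i then j else j + 1) = f j"
  by simp

lemma prod_insert_at:
  fixes g :: "'a \<Rightarrow> 'b::comm_monoid_mult"
  assumes "1 \<le> i" "i \<le> d + 1"
  shows "(\<Prod>j\<in>{1..d + 1}. g (insert_at i c f j)) = g c * (\<Prod>j\<in>{1..d}. g (f j))"
proof -
  have "(\<Prod>j\<in>{1..d + 1}. g (insert_at i c f j)) = g c * (\<Prod>j\<in>{1..d + 1} - {i}. g (insert_at i c f j))"
    using assms by (subst prod.remove[of _ i]) auto
  also have "(\<Prod>j\<in>{1..d + 1} - {i}. g (insert_at i c f j)) = (\<Prod>j\<in>{1..d}. g (f j))"
    using prod.reindex_bij_betw[OF bij_betw_skip_index[OF assms], of "\<lambda>j. g (insert_at i c f j)"]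
    by (simp only: insert_at_skip_index)
  finally show ?thesis .
qed

lemma sum_insert_at:
  fixes g :: "'a \<Rightarrow> 'b::comm_monoid_add"
  assumes "1 \<le> i" "i \<le> d + 1"
  shows "(\<Sum>j\<in>{1..d + 1}. g (insert_at i c f j)) = g c + (\<Sum>j\<in>{1..d}. g (f j))"
proof -
  have "(\<Sum>j\<in>{1..d + 1}. g (insert_at i c f j)) = g c + (\<Sum>j\<in>{1..d + 1} - {i}. g (insert_at i c f j))"
    using assms by (subst sum.remove[of _ i]) auto
  also have "(\<Sum>j\<in>{1..d + 1} - {i}. g (insert_at i c f j)) = (\<Sum>j\<in>{1..d}. g (f j))"
    using sum.reindex_bij_betw[OF bij_betw_skip_index[OF assms], of "\<lambda>j. g (insert_at i c f j)"]
    by (simp only: insert_at_skip_index)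
  finally show ?thesis .
qed

lemma Phi_insert_at:
  assumes "1 \<le> i" "i \<le> m + 1"
  shows "Phi (m + 1) (insert_at i c x) = Phi m x / selfpow c"
  using prod_insert_at[OF assms, of selfpow c x] by (simp add: Phi_def)

lemma Phi_insert_at_scaled:
  assumes "1 \<le> i" "i \<le> m + 1" "0 < t" "t < 1"
    and "\<And>j. j \<in> {1..m} \<Longrightarrow> 0 < x j" "(\<Sum>j\<in>{1..m}. x j) = 1"
  shows "Phi (m + 1) (insert_at i (1 - t) (\<lambda>j. t * x j)) = exp (binary_entropy t + t * entropy m x)"
proof -
  have "Phi m (\<lambda>j. t * x j) = exp (entropy m (\<lambda>j. t * x j))"
    using assms by (intro Phi_eq_exp_entropy) simp
  also have "\<dots> = exp (- t * ln t + t * entropy m x)"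
    using entropy_scale[of m x t] assms by simp
  finally have "Phi m (\<lambda>j. t * x j) = exp (- t * ln t + t * entropy m x)" .
  moreover have "selfpow (1 - t) = exp ((1 - t) * ln (1 - t))"
    using assms by (simp add: selfpow_eq_exp)
  ultimately show ?thesis
    using Phi_insert_at[OF assms(1,2)] by (simp add: binary_entropy_def exp_diff[symmetric])
qed

lemma exists_fraction_close:
  fixes s :: real and k :: nat
  assumes "1 \<le> k * s" "s < 1"
  shows "\<exists>q. 1 \<le> q \<and> q < k \<and> \<bar>real q / real k - s\<bar> < 1 / real k"
proof (intro exI conjI)
  define q where "q = nat \<lfloor>k * s\<rfloor>"
  have "0 < k" using assms by (cases k) auto
  have q: "real q \<le> k * s" "k * s < real q + 1" using assms by (simp_all add: q_def)
  moreover have "real k * s < real k" using assms \<open>0 < k\<close> by simp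
  ultimately show "1 \<le> q" "q < k" using assms by simp_all
  have "s - real q / k = (k * s - real q) / k" using \<open>0 < k\<close> by (simp add: field_simps)
  moreover have "(k * s - real q) / k < 1 / k" using q \<open>0 < k\<close> by (intro divide_strict_right_mono) auto
  moreover have "0 \<le> (k * s - real q) / k" using q by simp
  ultimately show "\<bar>real q / real k - s\<bar> < 1 / real k" by simp
qed

lemma exists_fraction_Phi_insert_at_close:
  fixes k :: nat and \<gamma> \<epsilon> :: real
  assumes "0 < \<gamma>" "\<And>j. j \<in> {1..m} \<Longrightarrow> \<gamma> \<le> x j" "(\<Sum>j\<in>{1..m}. x j) = 1"
    and "2 \<le> k" "(1 / \<gamma> + 1) ^ 3 < \<epsilon> * k"
  shows "\<exists>q. 1 \<le> q \<and> q < k \<and> (\<forall>i. 1 \<le> i \<and> i \<le> m + 1 \<longrightarrow>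
           \<bar>Phi (m + 1) (insert_at i (1 - q / k) (\<lambda>j. q / k * x j)) - Phi m x - 1\<bar> < \<epsilon>)"
proof -
  have pos: "\<And>j. j \<in> {1..m} \<Longrightarrow> 0 < x j" using assms(1,2) by (meson less_le_trans)
  define L where "L = entropy m x"
  have "1 \<le> exp L" using entropy_nonneg[OF pos assms(3)] by (simp add: L_def)
  have "exp L \<le> 1 / \<gamma>" using exp_entropy_le_inverse_min[OF assms(1-3)] by (simp add: L_def)
  define s where "s = exp L / (exp L + 1)"
  have "1 \<le> k * s" "s < 1"
  proof -
    have "1 / 2 \<le> s" using \<open>1 \<le> exp L\<close> by (simp add: s_def le_divide_eq add_pos_pos)
    then have "2 * (1 / 2) \<le> real k * s" using assms(4) by (intro mult_mono) auto
    then show "1 \<le> k * s" by simp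
    show "s < 1" by (simp add: s_def add_pos_pos)
  qed
  then obtain q where q: "1 \<le> q" "q < k" and close: "\<bar>real q / k - s\<bar> < 1 / k"
    using exists_fraction_close by blast
  define t where "t = real q / k"
  have t: "0 < t" "t < 1" using q by (simp_all add: t_def)
  have "\<bar>exp (binary_entropy t + t * L) - (exp L + 1)\<bar> \<le> (1 / \<gamma> + 1) ^ 3 * (1 / k)\<^sup>2"
    using exp_binary_entropy_close_to_max[OF \<open>1 \<le> exp L\<close> \<open>exp L \<le> 1 / \<gamma>\<close> t] close
    by (simp add: s_def t_def)
  also have "\<dots> \<le> (1 / \<gamma> + 1) ^ 3 / k"
    using assms(1,4) by (simp add: power2_eq_square divide_simps)
  also have "\<dots> < \<epsilon>"
    using assms(4,5) by (simp add: divide_less_eq mult.commute)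
  finally have "\<bar>exp (binary_entropy t + t * L) - (exp L + 1)\<bar> < \<epsilon>" .
  moreover have "Phi m x = exp L" unfolding L_def using pos by (rule Phi_eq_exp_entropy)
  moreover have "Phi (m + 1) (insert_at i (1 - t) (\<lambda>j. t * x j)) = exp (binary_entropy t + t * L)"
    if "1 \<le> i" "i \<le> m + 1" for i
    using Phi_insert_at_scaled[OF that t pos assms(3)] by (simp add: L_def)
  ultimately show ?thesis
    using q by (intro exI[of _ q]) (auto simp: t_def)
qed

lemma is_partition_scale:
  "is_partition n d f \<Longrightarrow> is_partition (q * n) d (\<lambda>j. q * f j)"
  by (simp add: is_partition_def sum_distrib_left[symmetric])

lemma exists_insert_position:
  fixes f :: "nat \<Rightarrow> 'a::linorder"
  shows "\<exists>i. 1 \<le> i \<and> i \<le> d + 1 \<and> (\<forall>j. 1 \<le> j \<and> j < i \<longrightarrow> c \<le> f j) \<and> (i \<le> d \<longrightarrow> f i \<le> c)"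
proof -
  define P where "P i \<longleftrightarrow> 1 \<le> i \<and> (i = d + 1 \<or> f i \<le> c)" for i
  define i where "i = (LEAST i. P i)"
  have "P (d + 1)" by (simp add: P_def)
  then have "P i" "i \<le> d + 1" unfolding i_def by (auto intro: LeastI Least_le)
  moreover have "c \<le> f j" if "1 \<le> j" "j < i" for j
    using not_less_Least[of j P] that by (auto simp: i_def P_def)
  ultimately show ?thesis by (auto simp: P_def)
qed

lemma is_partition_insert_at:
  assumes "is_partition n d f" "1 \<le> i" "i \<le> d + 1"
    and "\<forall>j. 1 \<le> j \<and> j < i \<longrightarrow> c \<le> f j" "i \<le> d \<longrightarrow> f i \<le> c"
  shows "is_partition (c + n) (d + 1) (insert_at i c f)"
  unfolding is_partition_def
proof (intro conjI allI impI)
  fix j assume j: "1 \<le> j \<and> j < d + 1"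
  have mono: "f (j + 1) \<le> f j" if "1 \<le> j" "j < d" for j
    using assms(1) that by (simp add: is_partition_def)
  show "insert_at i c f (j + 1) \<le> insert_at i c f j"
    using j assms(2-5) mono[of j] mono[of "j - 1"] by (auto simp: insert_at_def)
next
  show "(\<Sum>j\<in>{1..d + 1}. insert_at i c f j) = c + n"
    using sum_insert_at[OF assms(2,3), of "\<lambda>x. x" c f] assms(1) by (simp add: is_partition_def)
qed

lemma exists_is_partition_insert_at:
  assumes "is_partition n d lam" "q \<le> k"
  shows "\<exists>i. 1 \<le> i \<and> i \<le> d + 1 \<and>
           is_partition (k * n) (d + 1) (insert_at i ((k - q) * n) (\<lambda>j. q * lam j))"
proof -
  obtain i where i: "1 \<le> i" "i \<le> d + 1" "\<forall>j. 1 \<le> j \<and> j < i \<longrightarrow> (k - q) * n \<le> q * lam j"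
      "i \<le> d \<longrightarrow> q * lam i \<le> (k - q) * n"
    using exists_insert_position[where d = d and c = "(k - q) * n" and f = "\<lambda>j. q * lam j"]
    by blast
  have "is_partition ((k - q) * n + q * n) (d + 1) (insert_at i ((k - q) * n) (\<lambda>j. q * lam j))"
    using assms i by (intro is_partition_insert_at is_partition_scale) auto
  moreover have "(k - q) * n + q * n = k * n" using assms(2) by (simp flip: add_mult_distrib)
  ultimately show ?thesis using i by auto
qed

lemma sum_partition_frequencies:
  assumes "is_partition n d lam" "0 < n"
  shows "(\<Sum>j\<in>{1..d}. real (lam j) / real n) = 1"
  using assms by (simp add: is_partition_def flip: sum_divide_distrib of_nat_sum)

lemma Phi_part_insert_at:
  assumes "q < k" "0 < n"
  shows "Phi_part (k * n) (d + 1) (insert_at i ((k - q) * n) (\<lambda>j. q * lam j))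
           = Phi (d + 1) (insert_at i (1 - q / k) (\<lambda>j. q / k * (lam j / n)))"
  unfolding Phi_part_def using assms
  by (intro arg_cong[where f = "Phi (d + 1)"] ext) (simp add: insert_at_def of_nat_diff diff_divide_distrib)

theorem lemma3:
  fixes d :: nat and \<gamma> \<epsilon> :: real
  assumes "d \<ge> 1" and "\<gamma> > 0" and "\<epsilon> > 0"
  shows "\<exists>k::nat. k > 0 \<and>
    (\<forall>(n::nat) (lam::nat \<Rightarrow> nat).
       is_partition n d lam \<and> (\<forall>j\<in>{1..d}. lam j > 0) \<and>
       (\<forall>j\<in>{1..d}. real (lam j) / real n \<ge> \<gamma>) \<longrightarrow>
       (\<exists>(i::nat) (q::nat) (mu::nat \<Rightarrow> nat).
          1 \<le> i \<and> i \<le> d + 1 \<and> 1 \<le> q \<and> q < k \<and>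
          is_partition (k * n) (d + 1) mu \<and>
          (\<forall>j. 1 \<le> j \<and> j \<le> i - 1 \<longrightarrow> mu j = q * lam j) \<and>
          (\<forall>j. i \<le> j \<and> j \<le> d \<longrightarrow> mu (j + 1) = q * lam j) \<and>
          mu i = (k - q) * n \<and>
          \<bar>Phi_part (k * n) (d + 1) mu - Phi_part n d lam - 1\<bar> < \<epsilon>))"
proof -
  define k where "k = nat \<lceil>(1 / \<gamma> + 1) ^ 3 / \<epsilon>\<rceil> + 2"
  have "(1 / \<gamma> + 1) ^ 3 / \<epsilon> < k" unfolding k_def by linarith
  then have k: "2 \<le> k" "(1 / \<gamma> + 1) ^ 3 < \<epsilon> * k"
    using assms(3) by (simp_all add: k_def divide_less_eq mult.commute)
  show ?thesis
  proof (rule exI[of _ k], intro conjI allI impI)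
    show "0 < k" using k by simp
    fix n lam
    assume lam: "is_partition n d lam \<and> (\<forall>j\<in>{1..d}. lam j > 0) \<and>
       (\<forall>j\<in>{1..d}. real (lam j) / real n \<ge> \<gamma>)"
    define x where "x = (\<lambda>j. real (lam j) / real n)"
    have "0 < lam 1" "lam 1 \<le> (\<Sum>j\<in>{1..d}. lam j)" using lam assms(1) by (auto intro: member_le_sum)
    then have "0 < n" using lam by (simp add: is_partition_def)
    then obtain q where q: "1 \<le> q" "q < k" and close: "\<forall>i. 1 \<le> i \<and> i \<le> d + 1 \<longrightarrow>
        \<bar>Phi (d + 1) (insert_at i (1 - q / k) (\<lambda>j. q / k * x j)) - Phi d x - 1\<bar> < \<epsilon>"
      using exists_fraction_Phi_insert_at_close[of \<gamma> d x k \<epsilon>] sum_partition_frequencies[of n d lam]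
        assms(2) lam k by (auto simp: x_def)
    obtain i where i: "1 \<le> i" "i \<le> d + 1"
      and part: "is_partition (k * n) (d + 1) (insert_at i ((k - q) * n) (\<lambda>j. q * lam j))"
      using exists_is_partition_insert_at[of n d lam q k] lam q by auto
    have "i - 1 < i" using i(1) by simp
    then show "\<exists>i q mu. 1 \<le> i \<and> i \<le> d + 1 \<and> 1 \<le> q \<and> q < k \<and>
          is_partition (k * n) (d + 1) mu \<and>
          (\<forall>j. 1 \<le> j \<and> j \<le> i - 1 \<longrightarrow> mu j = q * lam j) \<and>
          (\<forall>j. i \<le> j \<and> j \<le> d \<longrightarrow> mu (j + 1) = q * lam j) \<and>
          mu i = (k - q) * n \<and>
          \<bar>Phi_part (k * n) (d + 1) mu - Phi_part n d lam - 1\<bar> < \<epsilon>"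
      using i q part close Phi_part_insert_at[OF q(2) \<open>0 < n\<close>, of d i lam]
      by (intro exI[of _ i] exI[of _ q] exI[of _ "insert_at i ((k - q) * n) (\<lambda>j. q * lam j)"])
        (auto simp: Phi_part_def x_def)
  qed
qed

end
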